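(* Let $G$ be a graph on vertex set $V=\{1,\ldots,n\}$ and let $G_l$ be a graph on $V$ with $E(G)\subseteq E(G_l)$. Suppose $A\in\mathcal{S}(G)$, $X\in\overline{\mathcal{S}_0}(G_l^c)$, and $AX-XA=0$. If for some pairwise distinct vertices $i,j,k$ with $k\in N_G[i]$ the pair $\{i,j\}$ is focused on $\{k\}$ with respect to $G$ and $G_l$, then $X\in\overline{\mathcal{S}_0}(G_{l+1}^c)$, where $G_{l+1}=G_l+\{j,k\}$ is obtained from $G_l$ by adding the edge $\{j,k\}$.
   Context: All graphs are finite, simple, undirected. For a graph $G$ on $\{1,\ldots,n\}$, $\mathcal{S}(G)$ is the set of real symmetric $n\times n$ matrices $A=(a_{ij})$ with $a_{ij}\neq0$ iff $\{i,j\}\in E(G)$ for $i\neq j$ (diagonal arbitrary). For a graph $H$ on $\{1,\ldots,n\}$, $\overline{\mathcal{S}_0}(H)$ is the set of real symmetric $n\times n$ matrices whose $(i,j)$ entry is zero whenever $i=j$ or $\{i,j\}\notin E(H)$; thus $X\in\overline{\mathcal{S}_0}(G_l^c)$ means $X$ is real symmetric with zero diagonal and $x_{ij}=0$ whenever $\{i,j\}\in E(G_l)$ ($G_l^c$ is the complement). $N_G[v]$ is the closed neighbourhood of $v$ in $G$ (vertices at distance at most 1 from $v$), and $N_G[v]^c$ denotes its complement in the vertex set. For a nonempty $U\subseteq V$, a pair $\{i,j\}$ is focused on $U$ with respect to $G$ and $G_l$ if $N_G[i]\cap N_{G_l}[j]^c\subseteq U$ and $N_G[j]\cap N_{G_l}[i]^c\subseteq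 U$. *)

theory Defs
  imports "HOL-Analysis.Analysis"
begin

text \<open>A finite simple graph on the vertex set UNIV of a finite type 'n, given by its
  adjacency relation (symmetric and irreflexive). The vertex type plays the role of {1..n}.\<close>

definition simple_graph :: "('n \<Rightarrow> 'n \<Rightarrow> bool) \<Rightarrow> bool" where
  "simple_graph G \<longleftrightarrow> (\<forall>a b. G a b \<longrightarrow> G b a) \<and> (\<forall>a. \<not> G a a)"

definition compl_graph :: "('n \<Rightarrow> 'n \<Rightarrow> bool) \<Rightarrow> 'n \<Rightarrow> 'n \<Rightarrow> bool" where
  "compl_graph G a b \<longleftrightarrow> a \<noteq> b \<and> \<not> G a b"

definition add_edge :: "('n \<Rightarrow> 'n \<Rightarrow> bool) \<Rightarrow> 'n \<Rightarrow> 'n \<Rightarrow> 'n \<Rightarrow> 'n \<Rightarrow> bool" where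
  "add_edge G j k a b \<longleftrightarrow> G a b \<or> {a, b} = {j, k}"

definition closed_nbhd :: "('n \<Rightarrow> 'n \<Rightarrow> bool) \<Rightarrow> 'n \<Rightarrow> 'n set" where
  "closed_nbhd G v = {u. u = v \<or> G v u}"

definition S_graph :: "('n::finite \<Rightarrow> 'n \<Rightarrow> bool) \<Rightarrow> (real^'n^'n) set" where
  "S_graph G = {A. transpose A = A \<and> (\<forall>i j. i \<noteq> j \<longrightarrow> (A $ i $ j \<noteq> 0 \<longleftrightarrow> G i j))}"

definition S0_bar :: "('n::finite \<Rightarrow> 'n \<Rightarrow> bool) \<Rightarrow> (real^'n^'n) set" where
  "S0_bar H = {X. transpose X = X \<and> (\<forall>i j. (i = j \<or> \<not> H i j) \<longrightarrow> X $ i $ j = 0)}"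

definition focused :: "('n \<Rightarrow> 'n \<Rightarrow> bool) \<Rightarrow> ('n \<Rightarrow> 'n \<Rightarrow> bool) \<Rightarrow> 'n set \<Rightarrow> 'n \<Rightarrow> 'n \<Rightarrow> bool" where
  "focused G Gl U i j \<longleftrightarrow>
     closed_nbhd G i \<inter> - closed_nbhd Gl j \<subseteq> U \<and> closed_nbhd G j \<inter> - closed_nbhd Gl i \<subseteq> U"

end

theory Submission
  imports Defs
begin

text \<open>Compare the (i,j) entries of AX = XA. A term a_it x_tj of (AX)_ij can only be nonzero
  for t in N_G[i] outside N_Gl[j], and a term x_it a_tj of (XA)_ij only for t in N_G[j]
  outside N_Gl[i]; focusing on {k} leaves a single term on each side. On the right it is
  x_ik a_kj = 0, because ik is an edge of G and hence of G_l. On the left a_ik is nonzero,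
  so x_kj = 0, which is exactly the new zero entry required by G_l + jk.\<close>

lemma symmetric_matrix_entry:
  assumes "transpose M = M"
  shows "M $ a $ b = M $ b $ a"
  using arg_cong[where f = "\<lambda>N. N $ b $ a", OF assms] by (simp add: transpose_def)

lemma S_graph_entry_sym: "A \<in> S_graph G \<Longrightarrow> A $ a $ b = A $ b $ a"
  unfolding S_graph_def by (blast intro: symmetric_matrix_entry)

lemma S_graph_entry_eq_0:
  assumes "A \<in> S_graph G" and "t \<notin> closed_nbhd G i"
  shows "A $ i $ t = 0"
proof -
  have "t \<noteq> i" and "\<not> G i t" using assms(2) unfolding closed_nbhd_def by auto
  moreover have "A $ i $ t \<noteq> 0 \<longleftrightarrow> G i t" if "t \<noteq> i"
    using assms(1) that unfolding S_graph_def by auto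
  ultimately show ?thesis by blast
qed

lemma S_graph_entry_neq_0: "A \<in> S_graph G \<Longrightarrow> G i k \<Longrightarrow> i \<noteq> k \<Longrightarrow> A $ i $ k \<noteq> 0"
  unfolding S_graph_def by auto

lemma S0_bar_entry_sym: "X \<in> S0_bar H \<Longrightarrow> X $ a $ b = X $ b $ a"
  unfolding S0_bar_def by (blast intro: symmetric_matrix_entry)

lemma S0_bar_compl_entry_eq_0:
  "X \<in> S0_bar (compl_graph H) \<Longrightarrow> t \<in> closed_nbhd H j \<Longrightarrow> X $ j $ t = 0"
  unfolding S0_bar_def compl_graph_def closed_nbhd_def by auto

lemma S0_bar_compl_add_edge:
  assumes "X \<in> S0_bar (compl_graph H)" and "X $ j $ k = 0"
  shows "X \<in> S0_bar (compl_graph (add_edge H j k))"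
  using assms S0_bar_entry_sym[OF assms(1)]
  unfolding S0_bar_def compl_graph_def add_edge_def doubleton_eq_iff by auto

lemma matrix_mult_entry_restrict:
  fixes A :: "'a::semiring_1^'n::finite^'m" and B :: "'a^'p^'n"
  assumes "\<And>t. t \<notin> U \<Longrightarrow> A $ i $ t * B $ t $ j = 0"
  shows "(A ** B) $ i $ j = (\<Sum>t\<in>U. A $ i $ t * B $ t $ j)"
proof -
  have "(A ** B) $ i $ j = (\<Sum>t\<in>UNIV. A $ i $ t * B $ t $ j)"
    by (simp add: matrix_matrix_mult_def)
  also have "\<dots> = (\<Sum>t\<in>U. A $ i $ t * B $ t $ j)"
    using assms by (intro sum.mono_neutral_right) auto
  finally show ?thesis .
qed

lemma commuting_entry_focused:
  assumes A: "A \<in> S_graph G" and X: "X \<in> S0_bar (compl_graph Gl)"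
    and comm: "A ** X = X ** A" and foc: "focused G Gl U i j"
  shows "(\<Sum>t\<in>U. A $ i $ t * X $ t $ j) = (\<Sum>t\<in>U. X $ i $ t * A $ t $ j)"
proof -
  have "A $ i $ t * X $ t $ j = 0" if "t \<notin> U" for t
  proof (cases "t \<in> closed_nbhd G i")
    case True
    with foc \<open>t \<notin> U\<close> have "t \<in> closed_nbhd Gl j" unfolding focused_def by blast
    then have "X $ t $ j = 0"
      using S0_bar_compl_entry_eq_0[OF X] S0_bar_entry_sym[OF X] by metis
    then show ?thesis by simp
  qed (simp add: S_graph_entry_eq_0[OF A])
  then have left: "(A ** X) $ i $ j = (\<Sum>t\<in>U. A $ i $ t * X $ t $ j)"
    by (rule matrix_mult_entry_restrict)
  have "X $ i $ t * A $ t $ j = 0" if "t \<notin> U" for t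
  proof (cases "t \<in> closed_nbhd G j")
    case True
    with foc \<open>t \<notin> U\<close> have "t \<in> closed_nbhd Gl i" unfolding focused_def by blast
    then show ?thesis by (simp add: S0_bar_compl_entry_eq_0[OF X])
  qed (metis S_graph_entry_eq_0[OF A] S_graph_entry_sym[OF A] mult_zero_right)
  then have right: "(X ** A) $ i $ j = (\<Sum>t\<in>U. X $ i $ t * A $ t $ j)"
    by (rule matrix_mult_entry_restrict)
  show ?thesis using left right comm by simp
qed

theorem lemma3p3:
  fixes G Gl :: "'n::finite \<Rightarrow> 'n \<Rightarrow> bool"
    and A X :: "real^'n^'n"
    and i j k :: 'n
  assumes "simple_graph G" and "simple_graph Gl"
    and "\<forall>a b. G a b \<longrightarrow> Gl a b"
    and "A \<in> S_graph G"
    and "X \<in> S0_bar (compl_graph Gl)"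
    and "A ** X - X ** A = 0"
    and "i \<noteq> j" and "j \<noteq> k" and "i \<noteq> k"
    and "k \<in> closed_nbhd G i"
    and "focused G Gl {k} i j"
  shows "X \<in> S0_bar (compl_graph (add_edge Gl j k))"
proof -
  have Gik: "G i k" using assms(9,10) unfolding closed_nbhd_def by auto
  have Xik: "X $ i $ k = 0"
    using S0_bar_compl_entry_eq_0[OF assms(5)] Gik assms(3) unfolding closed_nbhd_def by blast
  have "A $ i $ k * X $ k $ j = X $ i $ k * A $ k $ j"
    using commuting_entry_focused[OF assms(4,5) _ assms(11)] assms(6) by simp
  then have "X $ k $ j = 0"
    using Xik S_graph_entry_neq_0[OF assms(4) Gik assms(9)] by simp
  then have "X $ j $ k = 0" using S0_bar_entry_sym[OF assms(5)] by metis
  with assms(5) show ?thesis by (rule S0_bar_compl_add_edge)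
qed

end
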